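(* Let $n\ge 2$ and let $G=(A,B,E)$ be a $(k,\epsilon)$-unbalanced expander with $|A|=n$, $|B|=m$ and left degree $d$, where $1/\epsilon<n$ and $d<n$. Let $\Phi$ be the $m\times n$ adjacency matrix of $G$. Then there is an absolute constant $C>1$ (independent of $n,m,k,d,\epsilon$) such that for every $p$ with $1\le p\le 1+1/\log n$ and every $k$-sparse vector $x\in\mathbb{R}^n$, $$(1-C\epsilon)\,\|x\|_p\;\le\;\|d^{-1/p}\Phi x\|_p\;\le\;(1+C\epsilon)\,\|x\|_p .$$ (In particular, for $p=1$ one may take $(1-2\epsilon)\|x\|_1\le \|\Phi x\|_1/d\le \|x\|_1$.)
   Context: A $(k,\epsilon)$-unbalanced expander is a simple bipartite graph $G=(A,B,E)$ in which every vertex of $A$ has exactly $d$ neighbours (left degree $d$) such that for every $X\subseteq A$ with $|X|\le k$, the neighbourhood $N(X)\subseteq B$ satisfies $|N(X)|\ge(1-\epsilon)d|X|$. The adjacency matrix of $G$ (with $A=\{1,\dots,n\}$, $B=\{1,\dots,m\}$) is the $m\times n$ $0$–$1$ matrix with entry $(j,i)$ equal to $1$ iff $(i,j)\in E$. A vector is $k$-sparse if it has at most $k$ nonzero coordinates. $\|x\|_p=(\sum_i|x_i|^p)^{1/p}$. *)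

theory Defs
  imports Complex_Main
begin

text \<open>Left vertex set A = {0..<n}, right vertex set B = {0..<m}; the graph is given
  by its edge set E \<subseteq> A \<times> B (a simple bipartite graph).\<close>

definition nbhd :: "(nat \<times> nat) set \<Rightarrow> nat set \<Rightarrow> nat set" where
  "nbhd E X = {j. \<exists>i\<in>X. (i, j) \<in> E}"

definition unbalanced_expander ::
  "nat \<Rightarrow> nat \<Rightarrow> nat \<Rightarrow> nat \<Rightarrow> real \<Rightarrow> (nat \<times> nat) set \<Rightarrow> bool" where
  "unbalanced_expander n m d k \<epsilon> E \<longleftrightarrow>
     E \<subseteq> {0..<n} \<times> {0..<m} \<and>
     (\<forall>i<n. card {j. (i, j) \<in> E} = d) \<and>
     (\<forall>X. X \<subseteq> {0..<n} \<longrightarrow> card X \<le> k \<longrightarrow>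
        real (card (nbhd E X)) \<ge> (1 - \<epsilon>) * real d * real (card X))"

definition adj_matrix :: "(nat \<times> nat) set \<Rightarrow> nat \<Rightarrow> nat \<Rightarrow> real" where
  "adj_matrix E j i = (if (i, j) \<in> E then 1 else 0)"

definition mat_vec :: "nat \<Rightarrow> (nat \<Rightarrow> nat \<Rightarrow> real) \<Rightarrow> (nat \<Rightarrow> real) \<Rightarrow> nat \<Rightarrow> real" where
  "mat_vec n M x = (\<lambda>j. \<Sum>i<n. M j i * x i)"

definition pnorm :: "nat \<Rightarrow> real \<Rightarrow> (nat \<Rightarrow> real) \<Rightarrow> real" where
  "pnorm n p x = (\<Sum>i<n. \<bar>x i\<bar> powr p) powr (1 / p)"

definition sparse :: "nat \<Rightarrow> nat \<Rightarrow> (nat \<Rightarrow> real) \<Rightarrow> bool" where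
  "sparse n k x \<longleftrightarrow> card {i \<in> {..<n}. x i \<noteq> 0} \<le> k"

end

theory Submission
  imports Defs "HOL-Analysis.Derivative"
begin

(* Let S be the support of x and, for every right vertex j adjacent to S, let a_j be the largest
   |x_i| over the neighbours i of j in S. Counting the d edges at each left vertex gives
   sum_j sum_{i ~ j} |x_i|^p = d ||x||_p^p, and expansion, applied level by level to the values of
   |x|^p, shows that the heaviest terms alone carry sum_j a_j^p >= (1 - eps) d ||x||_p^p: the other
   edges carry at most eps d ||x||_p^p.
   Now (Phi x)_j is the heaviest term plus the others, whose absolute values sum to some b_j, so
   |(Phi x)_j|^p differs from a_j^p by at most p n^(p-1) b_j a_j^(p-1). For p <= 1 + 1/ln n the
   factor n^(p-1) is below e, and b_j a_j^(p-1) is at most n^(2(p-1)) times the p-th powers of the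
   other terms plus a_j^p / n. Since 1/n < eps, summing over j puts sum_j |(Phi x)_j|^p within
   O(eps) d ||x||_p^p of d ||x||_p^p, and p-th roots only shrink relative errors. For p = 1 no
   loss occurs at all: a_j - b_j <= |(Phi x)_j| <= a_j + b_j. *)

lemma powr_ge_Bernoulli:
  fixes y p :: real
  assumes "0 < y" "1 \<le> p"
  shows "1 + p * (y - 1) \<le> y powr p"
proof -
  have "((\<lambda>t. t powr p) has_field_derivative p) (at 1 within {0<..})"
    by (rule derivative_eq_intros refl | simp)+
  then have "p * (y - 1) \<le> y powr p - 1 powr p"
    using assms by (intro convex_on_imp_above_tangent[OF powr_convex]) (auto simp: interior_open)
  then show ?thesis by simp
qed

lemma powr_add_le:
  fixes a b p :: real
  assumes "0 < a" "0 \<le> b" "1 \<le> p"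
  shows "(a + b) powr p \<le> a powr p + p * b * (a + b) powr (p - 1)"
proof -
  have "(a + b) powr p * (1 + p * (a / (a + b) - 1)) \<le> (a + b) powr p * (a / (a + b)) powr p"
    using assms by (intro mult_left_mono powr_ge_Bernoulli) auto
  also have "\<dots> = a powr p" using assms by (simp add: powr_divide)
  also have "(a + b) powr p * (1 + p * (a / (a + b) - 1)) = (a + b) powr p - p * b * (a + b) powr (p - 1)"
    using assms by (simp add: powr_diff field_simps)
  finally show ?thesis by simp
qed

lemma powr_ge_diff:
  fixes a b y p :: real
  assumes "0 < a" "0 \<le> b" "0 \<le> y" "1 \<le> p" "a - b \<le> y"
  shows "a powr p - p * b * a powr (p - 1) \<le> y powr p"
proof (cases "b < a")
  case True
  have "a powr p * (1 + p * ((a - b) / a - 1)) \<le> a powr p * ((a - b) / a) powr p"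
    using True assms by (intro mult_left_mono powr_ge_Bernoulli) auto
  also have "\<dots> = (a - b) powr p" using True assms by (simp add: powr_divide)
  also have "\<dots> \<le> y powr p" using True assms by (intro powr_mono2) auto
  also have "a powr p * (1 + p * ((a - b) / a - 1)) = a powr p - p * b * a powr (p - 1)"
    using assms by (simp add: powr_diff field_simps)
  finally show ?thesis .
next
  case False
  have "a powr p = a * a powr (p - 1)" using assms by (simp add: powr_diff)
  also have "\<dots> \<le> p * b * a powr (p - 1)"
    using False assms by (intro mult_right_mono) (auto intro: order_trans[of _ b] simp: mult_le_cancel_right1)
  finally show ?thesis by (smt (verit) powr_ge_zero)
qed

lemma abs_powr_diff_le:
  fixes a b y p N :: real
  assumes "0 < a" "0 \<le> b" "0 \<le> y" "1 \<le> p" "1 \<le> N"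
    and "a - b \<le> y" "y \<le> a + b" "a + b \<le> N * a"
  shows "\<bar>y powr p - a powr p\<bar> \<le> p * N powr (p - 1) * b * a powr (p - 1)"
proof -
  have "y powr p \<le> (a + b) powr p"
    using assms by (intro powr_mono2) auto
  also have "\<dots> \<le> a powr p + p * b * (a + b) powr (p - 1)"
    using assms by (intro powr_add_le)
  also have "(a + b) powr (p - 1) \<le> N powr (p - 1) * a powr (p - 1)"
    using assms by (auto simp flip: powr_mult intro: powr_mono2)
  finally have "y powr p \<le> a powr p + p * b * (N powr (p - 1) * a powr (p - 1))"
    using assms by (simp add: mult_left_mono)
  moreover have "a powr p - p * b * a powr (p - 1) \<le> y powr p"
    using assms by (intro powr_ge_diff)
  moreover have "1 \<le> N powr (p - 1)" using assms by (simp add: ge_one_powr_ge_zero)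
  then have "p * b * a powr (p - 1) \<le> p * N powr (p - 1) * b * a powr (p - 1)"
    using mult_left_mono[of 1 "N powr (p - 1)" "p * b * a powr (p - 1)"] assms
    by (simp add: algebra_simps)
  ultimately show ?thesis by (simp add: abs_le_iff algebra_simps)
qed

lemma mult_powr_le_split:
  fixes u a p t :: real
  assumes "0 \<le> u" "0 \<le> a" "1 \<le> p" "0 < t"
  shows "u * a powr (p - 1) \<le> t powr (p - 1) * u powr p + a powr p / t"
proof (cases "a \<le> t * u")
  case True
  then have "0 < u \<or> a = 0" using assms by (cases "u = 0") auto
  then show ?thesis
  proof
    assume "0 < u"
    have "u * a powr (p - 1) = u powr p * (a / u) powr (p - 1)"
      using \<open>0 < u\<close> assms by (simp add: powr_divide powr_diff field_simps)
    also have "\<dots> \<le> u powr p * t powr (p - 1)"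
      using True \<open>0 < u\<close> assms by (intro mult_left_mono powr_mono2) (auto simp: field_simps)
    moreover have "0 \<le> a powr p / t" using assms by simp
    ultimately show ?thesis by (simp add: mult.commute)
  qed (simp add: add_increasing)
next
  case False
  have "u * a powr (p - 1) \<le> (a / t) * a powr (p - 1)"
    using False assms by (intro mult_right_mono) (auto simp: field_simps)
  also have "\<dots> = a powr p / t"
    using False assms by (cases "a = 0") (simp_all add: powr_diff)
  finally show ?thesis by (simp add: add_increasing)
qed

lemma powr_minus_one_le_exp_1:
  fixes N p :: real
  assumes "1 < N" "p \<le> 1 + 1 / ln N"
  shows "N powr (p - 1) \<le> exp 1"
proof -
  have "(p - 1) * ln N \<le> 1" using assms by (simp add: field_simps)
  then show ?thesis using assms by (simp add: powr_def mult.commute)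
qed

lemma inverse_ln_le_2:
  fixes N :: real
  assumes "2 \<le> N"
  shows "1 / ln N \<le> 2"
proof -
  have "exp (1/2::real) ^ 2 < 2 ^ 2"
    using exp_le by (simp add: power2_eq_square flip: exp_add)
  then have "exp (1/2::real) < 2" by (rule power_less_imp_less_base) auto
  then have "1 / 2 < ln (2::real)"
    by (metis exp_gt_zero ln_exp ln_less_cancel_iff zero_less_numeral)
  also have "\<dots> \<le> ln N" using assms by simp
  finally show ?thesis by (simp add: field_simps)
qed

lemma abs_powr_diff_le_rel:
  fixes X Y c q :: real
  assumes "0 \<le> X" "0 \<le> Y" "0 \<le> c" "0 < q" "q \<le> 1" "\<bar>Y - X\<bar> \<le> c * X"
  shows "\<bar>Y powr q - X powr q\<bar> \<le> c * X powr q"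
proof -
  have "Y powr q \<le> ((1 + c) * X) powr q"
    using assms by (intro powr_mono2) (auto simp: algebra_simps)
  also have "\<dots> = (1 + c) powr q * X powr q" using assms by (simp add: powr_mult)
  also have "\<dots> \<le> (1 + c) * X powr q"
    using powr_mono[of q 1 "1 + c"] assms by (intro mult_right_mono) auto
  finally have upper: "Y powr q \<le> (1 + c) * X powr q" .
  have "(1 - c) * X powr q \<le> Y powr q"
  proof (cases "c < 1")
    case True
    have "(1 - c) * X powr q \<le> (1 - c) powr q * X powr q"
      using powr_mono'[of q 1 "1 - c"] True assms by (intro mult_right_mono) auto
    also have "\<dots> = ((1 - c) * X) powr q" using True assms by (simp add: powr_mult)
    also have "\<dots> \<le> Y powr q"
      using True assms by (intro powr_mono2) (auto simp: abs_le_iff algebra_simps mult_left_le)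
    finally show ?thesis .
  next
    case False
    then have "(1 - c) * X powr q \<le> 0" by (simp add: mult_nonpos_nonneg)
    then show ?thesis by (meson order_trans powr_ge_zero)
  qed
  with upper show ?thesis by (simp add: abs_le_iff algebra_simps)
qed

lemma abs_sum_ge_twice_Max_minus:
  fixes f :: "'a \<Rightarrow> real"
  assumes "finite T" "T \<noteq> {}"
  shows "2 * Max ((\<lambda>i. \<bar>f i\<bar>) ` T) - (\<Sum>i\<in>T. \<bar>f i\<bar>) \<le> \<bar>\<Sum>i\<in>T. f i\<bar>"
proof -
  have "Max ((\<lambda>i. \<bar>f i\<bar>) ` T) \<in> (\<lambda>i. \<bar>f i\<bar>) ` T" using assms by (intro Max_in) auto
  then obtain i0 where i0: "i0 \<in> T" "\<bar>f i0\<bar> = Max ((\<lambda>i. \<bar>f i\<bar>) ` T)" by auto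
  have "\<bar>\<Sum>i\<in>T - {i0}. f i\<bar> \<le> (\<Sum>i\<in>T - {i0}. \<bar>f i\<bar>)" by (rule sum_abs)
  then show ?thesis using assms i0 by (simp add: sum.remove, arith)
qed

lemma sum_mult_powr_le_split:
  fixes u :: "'a \<Rightarrow> real" and a p N :: real
  assumes "finite R" "\<And>i. i \<in> R \<Longrightarrow> 0 \<le> u i" "0 \<le> a" "1 \<le> p" "1 \<le> N" "real (card R) \<le> N"
  shows "(\<Sum>i\<in>R. u i) * a powr (p - 1) \<le> (N powr (p - 1))\<^sup>2 * (\<Sum>i\<in>R. u i powr p) + a powr p / N"
proof -
  have "(\<Sum>i\<in>R. u i) * a powr (p - 1) \<le> (\<Sum>i\<in>R. (N\<^sup>2) powr (p - 1) * u i powr p + a powr p / N\<^sup>2)"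
    unfolding sum_distrib_right using assms by (intro sum_mono mult_powr_le_split) auto
  also have "\<dots> = (N powr (p - 1))\<^sup>2 * (\<Sum>i\<in>R. u i powr p) + real (card R) * (a powr p / N\<^sup>2)"
    using assms by (simp add: sum.distrib sum_distrib_left power2_eq_square powr_mult)
  also have "real (card R) * (a powr p / N\<^sup>2) \<le> N * (a powr p / N\<^sup>2)"
    using assms by (intro mult_right_mono) auto
  also have "N * (a powr p / N\<^sup>2) = a powr p / N"
    using assms by (simp add: power2_eq_square)
  finally show ?thesis by simp
qed

lemma abs_sum_powr_near_Max:
  fixes f :: "'a \<Rightarrow> real" and p N :: real
  assumes T: "finite T" "T \<noteq> {}" and card_T: "real (card T) \<le> N" and p: "1 \<le> p"
  defines "a \<equiv> Max ((\<lambda>i. \<bar>f i\<bar>) ` T)"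
  shows "\<bar>\<bar>\<Sum>i\<in>T. f i\<bar> powr p - a powr p\<bar>
    \<le> p * N powr (p - 1) * ((N powr (p - 1))\<^sup>2 * ((\<Sum>i\<in>T. \<bar>f i\<bar> powr p) - a powr p) + a powr p / N)"
proof -
  have "a \<in> (\<lambda>i. \<bar>f i\<bar>) ` T" unfolding a_def using T by (intro Max_in) auto
  then obtain i0 where i0: "i0 \<in> T" "\<bar>f i0\<bar> = a" by auto
  define R where "R = T - {i0}"
  define b where "b = (\<Sum>i\<in>R. \<bar>f i\<bar>)"
  have split: "(\<Sum>i\<in>T. g i) = g i0 + (\<Sum>i\<in>R. g i)" for g :: "'a \<Rightarrow> real"
    unfolding R_def using T i0 by (simp add: sum.remove)
  have "1 \<le> card T" "card R \<le> card T"
    using T unfolding R_def by (auto simp: Suc_le_eq card_gt_0_iff intro: card_mono)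
  then have N: "1 \<le> N" "real (card R) \<le> N" using card_T by linarith+
  have b: "0 \<le> b" "(\<Sum>i\<in>T. \<bar>f i\<bar>) = a + b" using i0 by (simp_all add: split b_def sum_nonneg)
  have lower: "a - b \<le> \<bar>\<Sum>i\<in>T. f i\<bar>"
    using abs_sum_ge_twice_Max_minus[OF T, of f] b unfolding a_def by simp
  have upper: "\<bar>\<Sum>i\<in>T. f i\<bar> \<le> a + b"
    using sum_abs[of f T] b by simp
  have "(\<Sum>i\<in>T. \<bar>f i\<bar>) \<le> real (card T) * a"
    using T sum_bounded_above[of T "\<lambda>i. \<bar>f i\<bar>" a] unfolding a_def by simp
  also have "\<dots> \<le> N * a" using card_T i0 by (intro mult_right_mono) auto
  finally have ab: "a + b \<le> N * a" using b by simp
  have "b * a powr (p - 1) \<le> (N powr (p - 1))\<^sup>2 * (\<Sum>i\<in>R. \<bar>f i\<bar> powr p) + a powr p / N"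
    unfolding b_def using T i0 N p by (intro sum_mult_powr_le_split) (auto simp: R_def)
  then have residual: "b * a powr (p - 1)
      \<le> (N powr (p - 1))\<^sup>2 * ((\<Sum>i\<in>T. \<bar>f i\<bar> powr p) - a powr p) + a powr p / N"
    using i0 by (simp add: split)
  show ?thesis
  proof (cases "a = 0")
    case True
    then have "\<bar>\<Sum>i\<in>T. f i\<bar> = 0" using lower upper ab by simp
    then show ?thesis using True residual b p N by simp
  next
    case False
    then have "\<bar>\<bar>\<Sum>i\<in>T. f i\<bar> powr p - a powr p\<bar> \<le> p * N powr (p - 1) * b * a powr (p - 1)"
      using i0 b p N lower upper ab by (intro abs_powr_diff_le) auto
    also have "\<dots> \<le> p * N powr (p - 1) * ((N powr (p - 1))\<^sup>2 * ((\<Sum>i\<in>T. \<bar>f i\<bar> powr p) - a powr p) + a powr p / N)"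
      using residual p by (simp add: mult.assoc mult_left_mono)
    finally show ?thesis .
  qed
qed

lemma Max_abs_powr:
  fixes f :: "'a \<Rightarrow> real"
  assumes "finite T" "T \<noteq> {}" "0 < p"
  shows "Max ((\<lambda>i. \<bar>f i\<bar> powr p) ` T) = Max ((\<lambda>i. \<bar>f i\<bar>) ` T) powr p"
proof (rule Max_eqI)
  have "Max ((\<lambda>i. \<bar>f i\<bar>) ` T) \<in> (\<lambda>i. \<bar>f i\<bar>) ` T" using assms by (intro Max_in) auto
  then show "Max ((\<lambda>i. \<bar>f i\<bar>) ` T) powr p \<in> (\<lambda>i. \<bar>f i\<bar> powr p) ` T" by auto
qed (use assms in \<open>auto intro: powr_mono2\<close>)

lemma Max_abs_powr_le_sum:
  fixes f :: "'a \<Rightarrow> real"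
  assumes "finite T" "T \<noteq> {}" "0 < p"
  shows "Max ((\<lambda>i. \<bar>f i\<bar>) ` T) powr p \<le> (\<Sum>i\<in>T. \<bar>f i\<bar> powr p)"
proof -
  have "Max ((\<lambda>i. \<bar>f i\<bar> powr p) ` T) \<in> (\<lambda>i. \<bar>f i\<bar> powr p) ` T" using assms by (intro Max_in) auto
  then show ?thesis
    using assms member_le_sum[of _ T "\<lambda>i. \<bar>f i\<bar> powr p"] by (auto simp flip: Max_abs_powr)
qed

lemma abs_sum_powr_near_Max_log_range:
  fixes f :: "'a \<Rightarrow> real"
  assumes T: "finite T" "T \<noteq> {}" "card T \<le> n"
    and n: "2 \<le> n" and p: "1 \<le> p" "p \<le> 1 + 1 / ln (real n)"
  defines "a \<equiv> Max ((\<lambda>i. \<bar>f i\<bar>) ` T)"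
  shows "\<bar>\<bar>\<Sum>i\<in>T. f i\<bar> powr p - a powr p\<bar>
    \<le> 81 * ((\<Sum>i\<in>T. \<bar>f i\<bar> powr p) - a powr p) + 9 * (a powr p / n)"
proof -
  define R where "R = (\<Sum>i\<in>T. \<bar>f i\<bar> powr p) - a powr p"
  have "0 \<le> R" unfolding R_def a_def using T p by (simp add: Max_abs_powr_le_sum)
  have "n powr (p - 1) \<le> 3" using powr_minus_one_le_exp_1[of n p] exp_le n p by simp
  moreover have "p \<le> 3" using inverse_ln_le_2[of n] n p by simp
  ultimately have "p * n powr (p - 1) \<le> 9" "(n powr (p - 1))\<^sup>2 \<le> 9"
    using p mult_mono[of p 3 "n powr (p - 1)" 3] power_mono[of "n powr (p - 1)" 3 2] by auto
  have "\<bar>\<bar>\<Sum>i\<in>T. f i\<bar> powr p - a powr p\<bar> \<le> p * n powr (p - 1) * ((n powr (p - 1))\<^sup>2 * R + a powr p / n)"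
    unfolding R_def a_def using T p by (intro abs_sum_powr_near_Max) auto
  also have "\<dots> \<le> 9 * ((n powr (p - 1))\<^sup>2 * R + a powr p / n)"
    using \<open>p * n powr (p - 1) \<le> 9\<close> \<open>0 \<le> R\<close> by (intro mult_right_mono) auto
  also have "\<dots> \<le> 9 * (9 * R + a powr p / n)"
    using mult_right_mono[OF \<open>(n powr (p - 1))\<^sup>2 \<le> 9\<close> \<open>0 \<le> R\<close>] by (simp add: mult.commute)
  finally show ?thesis by (simp add: R_def)
qed

definition supp :: "nat \<Rightarrow> (nat \<Rightarrow> real) \<Rightarrow> nat set" where
  "supp n x = {i \<in> {..<n}. x i \<noteq> 0}"

definition left_nbhd :: "(nat \<times> nat) set \<Rightarrow> nat set \<Rightarrow> nat \<Rightarrow> nat set" where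
  "left_nbhd E S j = {i \<in> S. (i, j) \<in> E}"

lemma unbalanced_expanderD:
  assumes "unbalanced_expander n m d k \<epsilon> E"
  shows "E \<subseteq> {..<n} \<times> {..<m}"
    and "i < n \<Longrightarrow> card {j. (i, j) \<in> E} = d"
    and "X \<subseteq> {..<n} \<Longrightarrow> card X \<le> k \<Longrightarrow> (1 - \<epsilon>) * real d * real (card X) \<le> real (card (nbhd E X))"
  using assms unfolding unbalanced_expander_def atLeast0LessThan by auto

lemma finite_nbhd: "finite E \<Longrightarrow> finite (nbhd E S)"
  unfolding nbhd_def by (rule finite_subset[of _ "snd ` E"]) force+

lemma left_nbhd_subset: "left_nbhd E S j \<subseteq> S"
  unfolding left_nbhd_def by auto

lemma finite_left_nbhd: "finite S \<Longrightarrow> finite (left_nbhd E S j)"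
  using finite_subset[OF left_nbhd_subset] .

lemma left_nbhd_nonempty: "j \<in> nbhd E S \<Longrightarrow> left_nbhd E S j \<noteq> {}"
  unfolding nbhd_def left_nbhd_def by auto

lemma sum_nbhd_left_nbhd:
  fixes h :: "nat \<Rightarrow> real"
  assumes "finite E" "finite S" and degree: "\<And>i. i \<in> S \<Longrightarrow> card {j. (i, j) \<in> E} = d"
  shows "(\<Sum>j\<in>nbhd E S. \<Sum>i\<in>left_nbhd E S j. h i) = real d * (\<Sum>i\<in>S. h i)"
proof -
  have "(\<Sum>j\<in>nbhd E S. \<Sum>i\<in>left_nbhd E S j. h i) = (\<Sum>i\<in>S. \<Sum>j\<in>{j \<in> nbhd E S. (i, j) \<in> E}. h i)"
    unfolding left_nbhd_def using assms by (intro sum.swap_restrict[symmetric] finite_nbhd)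
  also have "\<dots> = (\<Sum>i\<in>S. real d * h i)"
  proof (rule sum.cong)
    fix i assume "i \<in> S"
    then have "{j \<in> nbhd E S. (i, j) \<in> E} = {j. (i, j) \<in> E}" unfolding nbhd_def by auto
    then show "(\<Sum>j\<in>{j \<in> nbhd E S. (i, j) \<in> E}. h i) = real d * h i" using degree \<open>i \<in> S\<close> by simp
  qed simp
  finally show ?thesis by (simp add: sum_distrib_left)
qed

lemma sum_Max_left_nbhd_mono:
  fixes h :: "nat \<Rightarrow> real"
  assumes "finite E" "finite S" "S' \<subseteq> S" and nonneg: "\<And>i. i \<in> S \<Longrightarrow> 0 \<le> h i"
  shows "(\<Sum>j\<in>nbhd E S'. Max (h ` left_nbhd E S' j)) \<le> (\<Sum>j\<in>nbhd E S. Max (h ` left_nbhd E S j))"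
proof -
  have fin: "finite (left_nbhd E S j)" for j
    using assms by (meson finite_subset left_nbhd_subset)
  have "(\<Sum>j\<in>nbhd E S'. Max (h ` left_nbhd E S' j)) \<le> (\<Sum>j\<in>nbhd E S'. Max (h ` left_nbhd E S j))"
  proof (rule sum_mono)
    fix j assume "j \<in> nbhd E S'"
    then show "Max (h ` left_nbhd E S' j) \<le> Max (h ` left_nbhd E S j)"
      using fin \<open>S' \<subseteq> S\<close> left_nbhd_nonempty
      by (intro Max_mono image_mono) (auto simp: left_nbhd_def)
  qed
  also have "\<dots> \<le> (\<Sum>j\<in>nbhd E S. Max (h ` left_nbhd E S j))"
  proof (rule sum_mono2)
    show "nbhd E S' \<subseteq> nbhd E S" using \<open>S' \<subseteq> S\<close> unfolding nbhd_def by auto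
    fix j assume "j \<in> nbhd E S - nbhd E S'"
    then obtain i where "i \<in> left_nbhd E S j" using left_nbhd_nonempty by blast
    then show "0 \<le> Max (h ` left_nbhd E S j)"
      using fin nonneg left_nbhd_subset by (meson Max_ge finite_imageI imageI order_trans subsetD)
  qed (use assms finite_nbhd in auto)
  finally show ?thesis .
qed

(* Subtracting the minimum \<mu> of h from h lowers the left side by (1 - eps) d |S| \<mu> and the right
   side by |N(S)| \<mu>, which is at least as much by expansion; what remains is supported on a
   smaller set, where induction applies. *)
lemma sum_Max_left_nbhd_ge:
  fixes h :: "nat \<Rightarrow> real"
  assumes ue: "unbalanced_expander n m d k \<epsilon> E"
  shows "S \<subseteq> {..<n} \<Longrightarrow> card S \<le> k \<Longrightarrow> (\<And>i. i \<in> S \<Longrightarrow> 0 \<le> h i) \<Longrightarrow>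
    (1 - \<epsilon>) * real d * (\<Sum>i\<in>S. h i) \<le> (\<Sum>j\<in>nbhd E S. Max (h ` left_nbhd E S j))"
proof (induction "card S" arbitrary: S h rule: less_induct)
  case less
  show ?case
  proof (cases "S = {}")
    case True
    then show ?thesis by (simp add: nbhd_def)
  next
    case False
    have fin_E: "finite E" using unbalanced_expanderD(1)[OF ue] finite_subset by blast
    have fin_S: "finite S" using less.prems(1) finite_subset by blast
    define \<mu> where "\<mu> = Min (h ` S)"
    define h' where "h' i = h i - \<mu>" for i
    define S' where "S' = {i \<in> S. 0 < h' i}"
    have \<mu>_le: "\<mu> \<le> h i" if "i \<in> S" for i unfolding \<mu>_def using fin_S that by simp
    have "\<mu> \<in> h ` S" unfolding \<mu>_def using fin_S False by (intro Min_in) auto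
    then obtain i0 where "i0 \<in> S" "h i0 = \<mu>" by auto
    then have "S' \<subset> S" "0 \<le> \<mu>" using less.prems(3) unfolding S'_def h'_def by auto
    then have "card S' < card S" using fin_S by (simp add: psubset_card_mono)
    then have "(1 - \<epsilon>) * real d * (\<Sum>i\<in>S'. h' i) \<le> (\<Sum>j\<in>nbhd E S'. Max (h' ` left_nbhd E S' j))"
      using less \<open>S' \<subset> S\<close> by (intro less.hyps) (auto simp: S'_def)
    also have "\<dots> \<le> (\<Sum>j\<in>nbhd E S. Max (h' ` left_nbhd E S j))"
      using fin_E fin_S \<open>S' \<subset> S\<close> \<mu>_le by (intro sum_Max_left_nbhd_mono) (auto simp: h'_def)
    finally have IH: "(1 - \<epsilon>) * real d * (\<Sum>i\<in>S'. h' i) \<le> (\<Sum>j\<in>nbhd E S. Max (h' ` left_nbhd E S j))" .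
    have "(\<Sum>i\<in>S'. h' i) = (\<Sum>i\<in>S. h' i)"
      using fin_S \<mu>_le by (intro sum.mono_neutral_left) (auto simp: S'_def h'_def less_le)
    then have sum_h: "(\<Sum>i\<in>S. h i) = (\<Sum>i\<in>S'. h' i) + real (card S) * \<mu>"
      by (simp add: h'_def sum_subtractf)
    have "Max (h ` left_nbhd E S j) = Max (h' ` left_nbhd E S j) + \<mu>" if "j \<in> nbhd E S" for j
      using Max_add_commute[of "left_nbhd E S j" h' \<mu>] fin_S left_nbhd_nonempty[OF that]
      by (simp add: h'_def finite_subset[OF left_nbhd_subset])
    then have sum_Max: "(\<Sum>j\<in>nbhd E S. Max (h ` left_nbhd E S j))
        = (\<Sum>j\<in>nbhd E S. Max (h' ` left_nbhd E S j)) + real (card (nbhd E S)) * \<mu>"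
      by (simp add: sum.distrib)
    have "(1 - \<epsilon>) * real d * real (card S) * \<mu> \<le> real (card (nbhd E S)) * \<mu>"
      using unbalanced_expanderD(3)[OF ue less.prems(1,2)] \<open>0 \<le> \<mu>\<close> by (rule mult_right_mono)
    then show ?thesis using IH unfolding sum_h sum_Max by (simp add: algebra_simps)
  qed
qed

lemma mat_vec_adj_matrix:
  "mat_vec n (adj_matrix E) x j = (\<Sum>i\<in>left_nbhd E (supp n x) j. x i)"
  unfolding mat_vec_def adj_matrix_def
  by (rule sum.mono_neutral_cong_right) (auto simp: left_nbhd_def supp_def)

lemma sum_supp:
  fixes \<phi> :: "real \<Rightarrow> real"
  assumes "\<phi> 0 = 0"
  shows "(\<Sum>i<n. \<phi> (x i)) = (\<Sum>i\<in>supp n x. \<phi> (x i))"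
  using assms by (intro sum.mono_neutral_right) (auto simp: supp_def)

lemma sum_mat_vec_adj_matrix:
  fixes \<phi> :: "real \<Rightarrow> real"
  assumes E: "E \<subseteq> {..<n} \<times> {..<m}" and "\<phi> 0 = 0"
  shows "(\<Sum>j<m. \<phi> (mat_vec n (adj_matrix E) x j))
    = (\<Sum>j\<in>nbhd E (supp n x). \<phi> (\<Sum>i\<in>left_nbhd E (supp n x) j. x i))"
proof (rule sum.mono_neutral_cong_right)
  show "nbhd E (supp n x) \<subseteq> {..<m}" using E unfolding nbhd_def by auto
  show "\<forall>j\<in>{..<m} - nbhd E (supp n x). \<phi> (mat_vec n (adj_matrix E) x j) = 0"
  proof
    fix j assume "j \<in> {..<m} - nbhd E (supp n x)"
    then have "left_nbhd E (supp n x) j = {}" unfolding left_nbhd_def nbhd_def by auto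
    then show "\<phi> (mat_vec n (adj_matrix E) x j) = 0" using assms by (simp add: mat_vec_adj_matrix)
  qed
qed (simp_all add: mat_vec_adj_matrix)

lemma pnorm_one: "pnorm n 1 x = (\<Sum>i<n. \<bar>x i\<bar>)"
  unfolding pnorm_def by (simp add: sum_nonneg)

lemma pnorm_scaled_near:
  fixes x y :: "nat \<Rightarrow> real"
  assumes p: "1 \<le> p" and "0 < D" "0 \<le> c"
    and near: "\<bar>(\<Sum>j<m. \<bar>y j\<bar> powr p) - D * (\<Sum>i<n. \<bar>x i\<bar> powr p)\<bar> \<le> c * (D * (\<Sum>i<n. \<bar>x i\<bar> powr p))"
  shows "(1 - c) * pnorm n p x \<le> pnorm m p (\<lambda>j. D powr (- 1 / p) * y j)"
    and "pnorm m p (\<lambda>j. D powr (- 1 / p) * y j) \<le> (1 + c) * pnorm n p x"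
proof -
  define X where "X = (\<Sum>i<n. \<bar>x i\<bar> powr p)"
  define Y where "Y = (\<Sum>j<m. \<bar>y j\<bar> powr p)"
  have "- 1 / p * p = - 1" using p by simp
  then have "(D powr (- 1 / p)) powr p = D powr (- 1)" by (simp only: powr_powr)
  also have "\<dots> = 1 / D" using \<open>0 < D\<close> by (simp add: powr_minus_divide)
  finally have "\<bar>D powr (- 1 / p) * y j\<bar> powr p = \<bar>y j\<bar> powr p / D" for j
    by (simp add: abs_mult powr_mult)
  then have pnorm_y: "pnorm m p (\<lambda>j. D powr (- 1 / p) * y j) = (Y / D) powr (1 / p)"
    unfolding pnorm_def Y_def by (simp add: sum_divide_distrib)
  have "\<bar>Y / D - X\<bar> \<le> c * X"
    using near \<open>0 < D\<close> unfolding X_def Y_def by (simp add: field_simps abs_divide abs_of_pos)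
  then have "\<bar>(Y / D) powr (1 / p) - X powr (1 / p)\<bar> \<le> c * X powr (1 / p)"
    using assms unfolding X_def Y_def by (intro abs_powr_diff_le_rel) (auto intro!: sum_nonneg divide_nonneg_pos)
  moreover have "pnorm n p x = X powr (1 / p)" unfolding pnorm_def X_def ..
  ultimately show "(1 - c) * pnorm n p x \<le> pnorm m p (\<lambda>j. D powr (- 1 / p) * y j)"
    and "pnorm m p (\<lambda>j. D powr (- 1 / p) * y j) \<le> (1 + c) * pnorm n p x"
    unfolding pnorm_y by (simp_all add: abs_le_iff algebra_simps)
qed

locale sparse_expander =
  fixes n m d k :: nat and \<epsilon> :: real and E :: "(nat \<times> nat) set" and x :: "nat \<Rightarrow> real"
  assumes expander: "unbalanced_expander n m d k \<epsilon> E" and sparse: "sparse n k x"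
begin

abbreviation S :: "nat set" where "S \<equiv> supp n x"

abbreviation fibre :: "nat \<Rightarrow> nat set" where "fibre j \<equiv> left_nbhd E S j"

lemma supp_subset: "S \<subseteq> {..<n}" and finite_supp: "finite S" and card_supp: "card S \<le> k"
  using sparse by (auto simp: supp_def sparse_def)

lemma fibre_props:
  assumes "j \<in> nbhd E S"
  shows "finite (fibre j)" "fibre j \<noteq> {}" "card (fibre j) \<le> n"
  using assms finite_supp card_mono[OF _ order_trans[OF left_nbhd_subset supp_subset]]
  by (auto simp: finite_left_nbhd left_nbhd_nonempty)

lemma sum_fibres: "(\<Sum>j\<in>nbhd E S. \<Sum>i\<in>fibre j. h i) = real d * (\<Sum>i\<in>S. h i)"
proof (rule sum_nbhd_left_nbhd)
  show "finite E"
    using unbalanced_expanderD(1)[OF expander] by (rule finite_subset) simp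
qed (use finite_supp supp_subset unbalanced_expanderD(2)[OF expander] in auto)

lemma sum_mat_vec:
  fixes \<phi> :: "real \<Rightarrow> real"
  assumes "\<phi> 0 = 0"
  shows "(\<Sum>j<m. \<phi> (mat_vec n (adj_matrix E) x j)) = (\<Sum>j\<in>nbhd E S. \<phi> (\<Sum>i\<in>fibre j. x i))"
  using unbalanced_expanderD(1)[OF expander] assms by (rule sum_mat_vec_adj_matrix)

lemma sum_Max_fibres_ge:
  "(\<And>i. 0 \<le> h i) \<Longrightarrow> (1 - \<epsilon>) * real d * (\<Sum>i\<in>S. h i) \<le> (\<Sum>j\<in>nbhd E S. Max (h ` fibre j))"
  using sum_Max_left_nbhd_ge[OF expander supp_subset card_supp] by blast

lemma sum_abs_mat_vec_bounds:
  shows "(1 - 2 * \<epsilon>) * real d * (\<Sum>i<n. \<bar>x i\<bar>) \<le> (\<Sum>j<m. \<bar>mat_vec n (adj_matrix E) x j\<bar>)"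
    and "(\<Sum>j<m. \<bar>mat_vec n (adj_matrix E) x j\<bar>) \<le> real d * (\<Sum>i<n. \<bar>x i\<bar>)"
proof -
  define X where "X = (\<Sum>i\<in>S. \<bar>x i\<bar>)"
  define a where "a j = Max ((\<lambda>i. \<bar>x i\<bar>) ` fibre j)" for j
  have sum_x: "(\<Sum>i<n. \<bar>x i\<bar>) = X" unfolding X_def by (rule sum_supp) simp
  have sum_y: "(\<Sum>j<m. \<bar>mat_vec n (adj_matrix E) x j\<bar>) = (\<Sum>j\<in>nbhd E S. \<bar>\<Sum>i\<in>fibre j. x i\<bar>)"
    by (rule sum_mat_vec) simp
  have total: "(\<Sum>j\<in>nbhd E S. \<Sum>i\<in>fibre j. \<bar>x i\<bar>) = real d * X"
    unfolding X_def by (rule sum_fibres)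
  have heavy: "(1 - \<epsilon>) * real d * X \<le> (\<Sum>j\<in>nbhd E S. a j)"
    unfolding X_def a_def by (rule sum_Max_fibres_ge) simp
  have "(\<Sum>j\<in>nbhd E S. 2 * a j - (\<Sum>i\<in>fibre j. \<bar>x i\<bar>)) \<le> (\<Sum>j\<in>nbhd E S. \<bar>\<Sum>i\<in>fibre j. x i\<bar>)"
    unfolding a_def using fibre_props by (intro sum_mono abs_sum_ge_twice_Max_minus)
  then have "2 * (\<Sum>j\<in>nbhd E S. a j) - real d * X \<le> (\<Sum>j\<in>nbhd E S. \<bar>\<Sum>i\<in>fibre j. x i\<bar>)"
    unfolding sum_subtractf total by (simp add: sum_distrib_left)
  moreover have "(1 - 2 * \<epsilon>) * real d * X = 2 * ((1 - \<epsilon>) * real d * X) - real d * X"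
    by (simp add: algebra_simps)
  ultimately show "(1 - 2 * \<epsilon>) * real d * (\<Sum>i<n. \<bar>x i\<bar>) \<le> (\<Sum>j<m. \<bar>mat_vec n (adj_matrix E) x j\<bar>)"
    using heavy unfolding sum_x sum_y by linarith
  have "(\<Sum>j\<in>nbhd E S. \<bar>\<Sum>i\<in>fibre j. x i\<bar>) \<le> (\<Sum>j\<in>nbhd E S. \<Sum>i\<in>fibre j. \<bar>x i\<bar>)"
    by (intro sum_mono sum_abs)
  then show "(\<Sum>j<m. \<bar>mat_vec n (adj_matrix E) x j\<bar>) \<le> real d * (\<Sum>i<n. \<bar>x i\<bar>)"
    unfolding sum_x sum_y total .
qed

lemma sum_powr_mat_vec_near:
  assumes n: "2 \<le> n" and \<epsilon>: "0 < \<epsilon>" "1 / \<epsilon> < real n" and p: "1 \<le> p" "p \<le> 1 + 1 / ln (real n)"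
  shows "\<bar>(\<Sum>j<m. \<bar>mat_vec n (adj_matrix E) x j\<bar> powr p) - real d * (\<Sum>i<n. \<bar>x i\<bar> powr p)\<bar>
    \<le> 91 * \<epsilon> * (real d * (\<Sum>i<n. \<bar>x i\<bar> powr p))"
proof -
  define D where "D = real d * (\<Sum>i\<in>S. \<bar>x i\<bar> powr p)"
  define a where "a j = Max ((\<lambda>i. \<bar>x i\<bar>) ` fibre j)" for j
  define A where "A = (\<Sum>j\<in>nbhd E S. a j powr p)"
  have sum_x: "real d * (\<Sum>i<n. \<bar>x i\<bar> powr p) = D" unfolding D_def by (subst sum_supp) simp_all
  have sum_y: "(\<Sum>j<m. \<bar>mat_vec n (adj_matrix E) x j\<bar> powr p) = (\<Sum>j\<in>nbhd E S. \<bar>\<Sum>i\<in>fibre j. x i\<bar> powr p)"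
    by (rule sum_mat_vec) simp
  have total: "(\<Sum>j\<in>nbhd E S. \<Sum>i\<in>fibre j. \<bar>x i\<bar> powr p) = D"
    unfolding D_def by (rule sum_fibres)
  have "(1 - \<epsilon>) * D \<le> (\<Sum>j\<in>nbhd E S. Max ((\<lambda>i. \<bar>x i\<bar> powr p) ` fibre j))"
    unfolding D_def using sum_Max_fibres_ge[of "\<lambda>i. \<bar>x i\<bar> powr p"] by (simp add: mult.assoc)
  then have heavy: "(1 - \<epsilon>) * D \<le> A"
    unfolding A_def a_def using fibre_props p by (simp add: Max_abs_powr)
  have "A \<le> D"
    unfolding A_def a_def total[symmetric] using fibre_props p by (intro sum_mono Max_abs_powr_le_sum) auto
  have "\<bar>(\<Sum>j\<in>nbhd E S. \<bar>\<Sum>i\<in>fibre j. x i\<bar> powr p) - A\<bar>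
      \<le> (\<Sum>j\<in>nbhd E S. \<bar>\<bar>\<Sum>i\<in>fibre j. x i\<bar> powr p - a j powr p\<bar>)"
    unfolding A_def sum_subtractf[symmetric] by (rule sum_abs)
  also have "\<dots> \<le> (\<Sum>j\<in>nbhd E S. 81 * ((\<Sum>i\<in>fibre j. \<bar>x i\<bar> powr p) - a j powr p) + 9 * (a j powr p / n))"
    unfolding a_def using fibre_props n p by (intro sum_mono abs_sum_powr_near_Max_log_range) auto
  also have "\<dots> = 81 * (D - A) + 9 * (A / n)"
    unfolding A_def total[symmetric] by (simp add: sum.distrib sum_subtractf sum_distrib_left sum_divide_distrib)
  finally have "\<bar>(\<Sum>j\<in>nbhd E S. \<bar>\<Sum>i\<in>fibre j. x i\<bar> powr p) - A\<bar> \<le> 81 * (D - A) + 9 * (A / n)" .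
  moreover have "A / n \<le> \<epsilon> * D"
  proof -
    have "1 / real n \<le> \<epsilon>" using \<epsilon> n by (simp add: field_simps)
    moreover have "0 \<le> A" unfolding A_def by (simp add: sum_nonneg)
    ultimately have "A * (1 / n) \<le> D * \<epsilon>" using \<open>A \<le> D\<close> by (intro mult_mono) auto
    then show ?thesis by (simp add: mult.commute)
  qed
  ultimately have "\<bar>(\<Sum>j\<in>nbhd E S. \<bar>\<Sum>i\<in>fibre j. x i\<bar> powr p) - D\<bar> \<le> 91 * (\<epsilon> * D)"
    using heavy \<open>A \<le> D\<close> by (simp add: algebra_simps)
  then show ?thesis unfolding sum_x sum_y by (simp add: mult.assoc)
qed

end

theorem theorem1:
  shows "\<exists>C::real. C > 1 \<and>
    (\<forall>n m d k (\<epsilon>::real) E (p::real) (x::nat \<Rightarrow> real).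
       n \<ge> 2 \<longrightarrow> unbalanced_expander n m d k \<epsilon> E \<longrightarrow>
       0 < \<epsilon> \<longrightarrow> 1 / \<epsilon> < real n \<longrightarrow> 1 \<le> d \<longrightarrow> d < n \<longrightarrow>
       1 \<le> p \<longrightarrow> p \<le> 1 + 1 / ln (real n) \<longrightarrow> sparse n k x \<longrightarrow>
       (1 - C * \<epsilon>) * pnorm n p x
          \<le> pnorm m p (\<lambda>j. real d powr (- 1 / p) * mat_vec n (adj_matrix E) x j) \<and>
       pnorm m p (\<lambda>j. real d powr (- 1 / p) * mat_vec n (adj_matrix E) x j)
          \<le> (1 + C * \<epsilon>) * pnorm n p x)
    \<and> (\<forall>n m d k (\<epsilon>::real) E (x::nat \<Rightarrow> real).
       n \<ge> 2 \<longrightarrow> unbalanced_expander n m d k \<epsilon> E \<longrightarrow>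
       0 < \<epsilon> \<longrightarrow> 1 / \<epsilon> < real n \<longrightarrow> 1 \<le> d \<longrightarrow> d < n \<longrightarrow> sparse n k x \<longrightarrow>
       (1 - 2 * \<epsilon>) * pnorm n 1 x \<le> pnorm m 1 (mat_vec n (adj_matrix E) x) / real d \<and>
       pnorm m 1 (mat_vec n (adj_matrix E) x) / real d \<le> pnorm n 1 x)"
proof (intro exI[of _ 91] conjI allI impI)
  show "(1::real) < 91" by simp
next
  fix n m d k \<epsilon> E p and x :: "nat \<Rightarrow> real"
  assume "2 \<le> n" "unbalanced_expander n m d k \<epsilon> E" "0 < \<epsilon>" "1 / \<epsilon> < real n"
    and d: "1 \<le> d" and "d < n" and p: "1 \<le> p" "p \<le> 1 + 1 / ln (real n)" and "sparse n k x"
  then interpret sparse_expander n m d k \<epsilon> E x by unfold_locales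
  have "\<bar>(\<Sum>j<m. \<bar>mat_vec n (adj_matrix E) x j\<bar> powr p) - real d * (\<Sum>i<n. \<bar>x i\<bar> powr p)\<bar>
      \<le> (91 * \<epsilon>) * (real d * (\<Sum>i<n. \<bar>x i\<bar> powr p))"
    using sum_powr_mat_vec_near \<open>2 \<le> n\<close> \<open>0 < \<epsilon>\<close> \<open>1 / \<epsilon> < real n\<close> p by simp
  then show "(1 - 91 * \<epsilon>) * pnorm n p x \<le> pnorm m p (\<lambda>j. real d powr (- 1 / p) * mat_vec n (adj_matrix E) x j)"
    and "pnorm m p (\<lambda>j. real d powr (- 1 / p) * mat_vec n (adj_matrix E) x j) \<le> (1 + 91 * \<epsilon>) * pnorm n p x"
    using p d \<open>0 < \<epsilon>\<close> by (intro pnorm_scaled_near; simp)+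
next
  fix n m d k \<epsilon> E and x :: "nat \<Rightarrow> real"
  assume "2 \<le> n" "unbalanced_expander n m d k \<epsilon> E" "0 < \<epsilon>" "1 / \<epsilon> < real n"
    and d: "1 \<le> d" and "d < n" and "sparse n k x"
  then interpret sparse_expander n m d k \<epsilon> E x by unfold_locales
  show "(1 - 2 * \<epsilon>) * pnorm n 1 x \<le> pnorm m 1 (mat_vec n (adj_matrix E) x) / real d"
    and "pnorm m 1 (mat_vec n (adj_matrix E) x) / real d \<le> pnorm n 1 x"
    using sum_abs_mat_vec_bounds d unfolding pnorm_one by (simp_all add: field_simps)
qed

end
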